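(* Let $f:\mathbb{R}^n\to\mathbb{R}$ be locally Lipschitz continuous at $\bar x$ with local Lipschitz modulus $0$, i.e. $\limsup_{x,x'\to\bar x,\,x\ne x'}|f(x)-f(x')|/\|x-x'\|=0$. Then $\mathrm{epi}\, f=\{(x,t):t\ge f(x)\}$ is smoothly approximately convex at $(\bar x,\bar s)$ for every $\bar s\ge f(\bar x)$.
   Context: A set $C\subseteq\mathbb{R}^N$ is smoothly approximately convex at $\bar z\in C$ if for every $\epsilon>0$ there is a neighborhood $W$ of $\bar z$ such that for all $z,z'\in C\cap W$ there is a map $\gamma:[0,1]\to C$, extending to a $\mathcal{C}^{(1)}$ map on an open neighborhood of $[0,1]$, with $\gamma(0)=z,\gamma(1)=z'$ and $\|\gamma'(t)-(z'-z)\|\le\epsilon\|z'-z\|$ for all $t\in[0,1]$. *)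

theory Defs
  imports "HOL-Analysis.Analysis"
begin

text \<open>Local Lipschitz modulus of f at xbar equals 0:
  limsup_{x,x' -> xbar, x ~= x'} |f x - f x'| / norm (x - x') = 0,
  written out with epsilon/delta (the quotient is nonnegative).\<close>
definition lip_modulus_zero :: "('a::real_normed_vector \<Rightarrow> real) \<Rightarrow> 'a \<Rightarrow> bool" where
  "lip_modulus_zero f xbar \<longleftrightarrow>
     (\<forall>\<epsilon>>0. \<exists>\<delta>>0. \<forall>x\<in>ball xbar \<delta>. \<forall>x'\<in>ball xbar \<delta>. x \<noteq> x' \<longrightarrow>
        \<bar>f x - f x'\<bar> / norm (x - x') \<le> \<epsilon>)"

definition epigraph :: "('a \<Rightarrow> real) \<Rightarrow> ('a \<times> real) set" where
  "epigraph f = {(x, t). f x \<le> t}"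

text \<open>The curve gamma is given on all of
  the reals; it is required to be C^1 on an open set U containing [0,1], and its
  restriction to [0,1] is the path of the paper.\<close>
definition smoothly_approx_convex :: "'a::euclidean_space set \<Rightarrow> 'a \<Rightarrow> bool" where
  "smoothly_approx_convex C zbar \<longleftrightarrow> zbar \<in> C \<and>
     (\<forall>\<epsilon>>0. \<exists>W. open W \<and> zbar \<in> W \<and>
        (\<forall>z\<in>C \<inter> W. \<forall>z'\<in>C \<inter> W. \<exists>\<gamma> :: real \<Rightarrow> 'a.
           \<gamma> ` {0..1} \<subseteq> C \<and> \<gamma> 0 = z \<and> \<gamma> 1 = z' \<and>
           (\<exists>U \<gamma>'. open U \<and> {0..1} \<subseteq> U \<and>
              (\<forall>t\<in>U. (\<gamma> has_vector_derivative \<gamma>' t) (at t)) \<and> continuous_on U \<gamma>' \<and>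
              (\<forall>t\<in>{0..1}. norm (\<gamma>' t - (z' - z)) \<le> \<epsilon> * norm (z' - z)))))"

end

theory Submission
  imports Defs
begin

text \<open>Near \<open>xbar\<close> the function is \<open>\<epsilon>/2\<close>-Lipschitz, and a Lipschitz function exceeds its
  chords by at most a parabola: \<open>f ((1 - s) x + s x') \<le> (1 - s) f x + s f x' + \<epsilon> s (1 - s) \<parallel>x' - x\<parallel>\<close>.
  Hence lifting the segment from \<open>z = (x, t)\<close> to \<open>z' = (x', t')\<close> by the vertical bump
  \<open>c s (1 - s)\<close> with \<open>c = \<epsilon> \<parallel>x' - x\<parallel>\<close> keeps it inside the epigraph, while its velocity differs
  from \<open>z' - z\<close> by at most \<open>\<bar>c\<bar> \<le> \<epsilon> \<parallel>z' - z\<parallel>\<close>.\<close>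

lemma lip_modulus_zero_imp_lipschitz_on_ball:
  assumes "lip_modulus_zero f xbar" "L > 0"
  obtains d where "d > 0" "L-lipschitz_on (ball xbar d) f"
proof -
  obtain d where "d > 0" and d: "\<forall>x\<in>ball xbar d. \<forall>x'\<in>ball xbar d. x \<noteq> x' \<longrightarrow>
        \<bar>f x - f x'\<bar> / norm (x - x') \<le> L"
    using assms unfolding lip_modulus_zero_def by blast
  have "L-lipschitz_on (ball xbar d) f"
  proof (rule lipschitz_onI)
    fix x x' assume "x \<in> ball xbar d" "x' \<in> ball xbar d"
    with d show "dist (f x) (f x') \<le> L * dist x x'"
      by (cases "x = x'") (auto simp: dist_norm dist_real_def divide_le_eq mult.commute)
  qed (use \<open>L > 0\<close> in simp)
  with \<open>d > 0\<close> show thesis by (rule that)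
qed

lemma lipschitz_on_convex_combination_le:
  fixes f :: "'a::real_normed_vector \<Rightarrow> real"
  assumes "L-lipschitz_on S f" "convex S" "x \<in> S" "x' \<in> S" "0 \<le> s" "s \<le> 1"
  shows "f ((1 - s) *\<^sub>R x + s *\<^sub>R x') \<le> (1 - s) * f x + s * f x' + 2 * L * s * (1 - s) * norm (x' - x)"
proof -
  define p where "p = (1 - s) *\<^sub>R x + s *\<^sub>R x'"
  have "p \<in> S" using assms(2-6) unfolding p_def convex_def by auto
  have "p - x = s *\<^sub>R (x' - x)" "p - x' = (1 - s) *\<^sub>R (x - x')"
    by (simp_all add: p_def algebra_simps)
  then have dist_p: "dist p x = s * norm (x' - x)" "dist p x' = (1 - s) * norm (x' - x)"
    using assms(5,6) by (simp_all add: dist_norm norm_minus_commute)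
  have near_x: "f p \<le> f x + L * (s * norm (x' - x))"
    using lipschitz_onD[OF assms(1) \<open>p \<in> S\<close> assms(3)] by (simp add: dist_p dist_real_def)
  have near_x': "f p \<le> f x' + L * ((1 - s) * norm (x' - x))"
    using lipschitz_onD[OF assms(1) \<open>p \<in> S\<close> assms(4)] by (simp add: dist_p dist_real_def)
  have "f p = (1 - s) * f p + s * f p" by (simp add: algebra_simps)
  also have "\<dots> \<le> (1 - s) * (f x + L * (s * norm (x' - x))) + s * (f x' + L * ((1 - s) * norm (x' - x)))"
    using assms(5,6) near_x near_x' by (intro add_mono mult_left_mono) auto
  also have "\<dots> = (1 - s) * f x + s * f x' + 2 * L * s * (1 - s) * norm (x' - x)"
    by (simp add: algebra_simps)
  finally show ?thesis by (simp add: p_def)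
qed

definition parabolic_lift :: "real \<Rightarrow> 'a \<times> real \<Rightarrow> 'a \<times> real \<Rightarrow> real \<Rightarrow> 'a::real_vector \<times> real" where
  "parabolic_lift c z z' s = (1 - s) *\<^sub>R z + s *\<^sub>R z' + (c * s * (1 - s)) *\<^sub>R (0, 1)"

lemma parabolic_lift_Pair:
  "parabolic_lift c (x, t) (x', t') s = ((1 - s) *\<^sub>R x + s *\<^sub>R x', (1 - s) * t + s * t' + c * s * (1 - s))"
  by (simp add: parabolic_lift_def)

lemma parabolic_lift_0 [simp]: "parabolic_lift c z z' 0 = z"
  and parabolic_lift_1 [simp]: "parabolic_lift c z z' 1 = z'"
  by (simp_all add: parabolic_lift_def zero_prod_def)

lemma parabolic_lift_has_vector_derivative:
  "(parabolic_lift c z z' has_vector_derivative (z' - z) + (c * (1 - 2 * s)) *\<^sub>R (0, 1)) (at s)"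
  unfolding parabolic_lift_def has_vector_derivative_def
  by (auto intro!: derivative_eq_intros simp: algebra_simps)

lemma norm_parabolic_bump_velocity_le:
  assumes "0 \<le> s" "s \<le> 1"
  shows "norm ((c * (1 - 2 * s)) *\<^sub>R (0::'a::real_normed_vector, 1::real)) \<le> \<bar>c\<bar>"
proof -
  have "norm ((c * (1 - 2 * s)) *\<^sub>R (0::'a, 1::real)) = \<bar>c\<bar> * \<bar>1 - 2 * s\<bar>"
    by (simp add: norm_Pair abs_mult)
  also have "\<dots> \<le> \<bar>c\<bar>"
    using assms by (intro mult_right_le_one_le) auto
  finally show ?thesis .
qed

lemma parabolic_lift_in_epigraph:
  fixes f :: "'a::real_normed_vector \<Rightarrow> real"
  assumes "L-lipschitz_on S f" "convex S" "x \<in> S" "x' \<in> S"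
    and "(x, t) \<in> epigraph f" "(x', t') \<in> epigraph f" "0 \<le> s" "s \<le> 1"
  shows "parabolic_lift (2 * L * norm (x' - x)) (x, t) (x', t') s \<in> epigraph f"
proof -
  have "f x \<le> t" "f x' \<le> t'" using assms(5,6) by (simp_all add: epigraph_def)
  then have "(1 - s) * f x + s * f x' \<le> (1 - s) * t + s * t'"
    using assms(7,8) by (intro add_mono mult_left_mono) auto
  moreover have "2 * L * s * (1 - s) * norm (x' - x) = 2 * L * norm (x' - x) * s * (1 - s)"
    by (simp add: mult_ac)
  ultimately have "f ((1 - s) *\<^sub>R x + s *\<^sub>R x') \<le> (1 - s) * t + s * t' + 2 * L * norm (x' - x) * s * (1 - s)"
    using lipschitz_on_convex_combination_le[OF assms(1-4,7,8)] by linarith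
  then show ?thesis by (simp add: parabolic_lift_Pair epigraph_def)
qed

definition approx_chord_path :: "real \<Rightarrow> 'a::real_normed_vector set \<Rightarrow> 'a \<Rightarrow> 'a \<Rightarrow> bool" where
  "approx_chord_path e C z z' \<longleftrightarrow> (\<exists>\<gamma>. \<gamma> ` {0..1} \<subseteq> C \<and> \<gamma> 0 = z \<and> \<gamma> 1 = z' \<and>
     (\<exists>U \<gamma>'. open U \<and> {0..1} \<subseteq> U \<and>
        (\<forall>t\<in>U. (\<gamma> has_vector_derivative \<gamma>' t) (at t)) \<and> continuous_on U \<gamma>' \<and>
        (\<forall>t\<in>{0..1}. norm (\<gamma>' t - (z' - z)) \<le> e * norm (z' - z))))"

lemma smoothly_approx_convex_iff_approx_chord_path:
  "smoothly_approx_convex C zbar \<longleftrightarrow> zbar \<in> C \<and>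
     (\<forall>\<epsilon>>0. \<exists>W. open W \<and> zbar \<in> W \<and> (\<forall>z\<in>C \<inter> W. \<forall>z'\<in>C \<inter> W. approx_chord_path \<epsilon> C z z'))"
  unfolding smoothly_approx_convex_def approx_chord_path_def ..

lemma lipschitz_on_epigraph_approx_chord_path:
  fixes f :: "'a::real_normed_vector \<Rightarrow> real"
  assumes "L-lipschitz_on S f" "convex S"
    and "z \<in> epigraph f \<inter> S \<times> UNIV" "z' \<in> epigraph f \<inter> S \<times> UNIV"
  shows "approx_chord_path (2 * L) (epigraph f) z z'"
proof -
  obtain x t x' t' where z: "z = (x, t)" and z': "z' = (x', t')" by fastforce
  define c where "c = 2 * L * norm (x' - x)"
  define \<gamma> where "\<gamma> = parabolic_lift c z z'"
  define \<gamma>' where "\<gamma>' = (\<lambda>s. (z' - z) + (c * (1 - 2 * s)) *\<^sub>R (0::'a, 1::real))"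
  have "\<gamma> ` {0..1} \<subseteq> epigraph f"
    using parabolic_lift_in_epigraph[OF assms(1,2)] assms(3,4) by (auto simp: \<gamma>_def c_def z z')
  moreover have "\<gamma> 0 = z" "\<gamma> 1 = z'" by (simp_all add: \<gamma>_def)
  moreover have "\<forall>s\<in>UNIV. (\<gamma> has_vector_derivative \<gamma>' s) (at s)"
    unfolding \<gamma>_def \<gamma>'_def using parabolic_lift_has_vector_derivative by blast
  moreover have "continuous_on UNIV \<gamma>'"
    unfolding \<gamma>'_def by (intro continuous_intros)
  moreover have "\<bar>c\<bar> \<le> 2 * L * norm (z' - z)"
    using lipschitz_on_nonneg[OF assms(1)] norm_fst_le[of "x' - x" "t' - t"]
    by (simp add: c_def z z' mult_left_mono)
  then have "\<forall>s\<in>{0..1}. norm (\<gamma>' s - (z' - z)) \<le> 2 * L * norm (z' - z)"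
    using norm_parabolic_bump_velocity_le[of _ c] by (force simp: \<gamma>'_def)
  ultimately show ?thesis
    unfolding approx_chord_path_def using open_UNIV subset_UNIV by blast
qed

theorem proposition3p4:
  fixes f :: "'n::euclidean_space \<Rightarrow> real" and xbar :: 'n and sbar :: real
  assumes "lip_modulus_zero f xbar"
    and "sbar \<ge> f xbar"
  shows "smoothly_approx_convex (epigraph f) (xbar, sbar)"
  unfolding smoothly_approx_convex_iff_approx_chord_path
proof (intro conjI allI impI)
  show "(xbar, sbar) \<in> epigraph f" using assms(2) by (simp add: epigraph_def)
  fix \<epsilon> :: real assume "\<epsilon> > 0"
  then obtain d where "d > 0" and lip: "(\<epsilon> / 2)-lipschitz_on (ball xbar d) f"
    using lip_modulus_zero_imp_lipschitz_on_ball[OF assms(1), of "\<epsilon> / 2"] by auto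
  then show "\<exists>W. open W \<and> (xbar, sbar) \<in> W \<and>
      (\<forall>z\<in>epigraph f \<inter> W. \<forall>z'\<in>epigraph f \<inter> W. approx_chord_path \<epsilon> (epigraph f) z z')"
    using lipschitz_on_epigraph_approx_chord_path[OF lip convex_ball]
    by (intro exI[of _ "ball xbar d \<times> UNIV"]) (auto simp: open_Times)
qed

end
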